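(* Let $\mathcal A=(Q,\Sigma,\delta,\rho)$ be a connected bireversible Mealy automaton whose labeled orbit tree $\mathfrak t(\mathcal A)$ has no active self-liftable branch, and let $\mathfrak j=\mathfrak j(\mathbf e)$ be a jungle tree whose trunk $\mathbf e$ has length $n$ and edge labels $k_1,\dots,k_n$ (from the root down). Then for every $i\in\{0,\dots,n\}$ and every $\mathbf u\in Q^i$ which is a prefix of some stem, the number of stems of $\mathfrak j$ with prefix $\mathbf u$ equals $k_{i+1}k_{i+2}\cdots k_n$ (in particular it depends only on $i$).
   Context: Mealy automata. A Mealy automaton is $\mathcal A=(Q,\Sigma,\delta,\rho)$ with $Q,\Sigma$ finite non-empty sets, $\delta=(\delta_i\colon Q\to Q)_{i\in\Sigma}$, $\rho=(\rho_x\colon\Sigma\to\Sigma)_{x\in Q}$; transitions $x\xrightarrow{i\mid\rho_x(i)}\delta_i(x)$. Invertible: each $\rho_x$ a permutation of $\Sigma$; reversible: each $\delta_i$ a permutation of $Q$; bireversible: invertible, reversible, and for each $j\in\Sigma$ the map $x\mapsto\delta_{\rho_x^{-1}(j)}(x)$ is a permutation of $Q$. Connected: the directed graph on $Q$ with edges $x\to\delta_i(x)$ is connected. Extensions: $\rho_x(i\mathbf s)=\rho_x(i)\rho_{\delta_i(x)}(\mathbf s)$; $\rho_{x_1\cdots x_m}=\rho_{x_m}\circ\cdots\circ\rho_{x_1}$; $\delta_i(x\mathbf u)=\delta_i(x)\delta_{\rho_x(i)}(\mathbf u)$ on $Q^*$, $\delta_{i_1\cdots i_m}=\delta_{i_m}\circ\cdots\circ\delta_{i_1}$.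 The connected components of $\mathcal A^n$ (stateset $Q^n$, transitions $\mathbf u\xrightarrow{i\mid\rho_{\mathbf u}(i)}\delta_i(\mathbf u)$) are, for reversible $\mathcal A$, the orbits of $Q^n$ under the maps $\delta_{\mathbf s}$. Orbit tree $\mathfrak t(\mathcal A)$: vertices at level $n\ge0$ are the connected components of $\mathcal A^n$; an edge from the component of $\mathbf u\in Q^n$ to that of $\mathbf ux$ for all $\mathbf u,x$; edge $C\to D$ labeled $\#D/\#C$. $\top,\bot$ = first/last vertex of a downward path; level of an edge/path = level of its top vertex. A word of $Q^*\cup Q^\omega$ represents the initial path through the components of its prefixes. Edge $e$ is liftable to $f$ if every word of $\bot(e)$ has a suffix in $\bot(f)$; paths are liftable if corresponding edges are. $f$ is a legitimate child of $e$ if $\top(f)=\bot(e)$ and $f$ is liftable to $e$. A path/subtree $\mathfrak s$ is $k$-self-liftable if for all $i\ge0$ every path in $\mathfrak s$ starting at level $i+k$ is liftable to a path in $\mathfrak s$ starting at level $i$; self-liftable if $k$-self-liftable for some $k>0$. A branch (infinite initial path) is active if its labels are not eventually all $1$. Jungle trees: for a finite 1-self-liftable initial path $\mathbf e$ of length $n$ whose last edge has at least two legitimate children, all labeled $1$, $\mathfrak j(\mathbf e)$ consists of $\mathbf e$ (the trunk) plus all edges descending from $\bot(\mathbf e)$ that are liftable to the last edge of $\mathbf e$. Stems: the words of $\bot(\mathbf e)\subseteq Q^n$. *)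

theory Defs
  imports Complex_Main "HOL-Library.Sublist"
begin

record ('q, 'a) mealy =
  states :: "'q set"
  alph   :: "'a set"
  trans  :: "'a \<Rightarrow> 'q \<Rightarrow> 'q"    (* delta_i x *)
  outp   :: "'q \<Rightarrow> 'a \<Rightarrow> 'a"    (* rho_x i *)

definition mealy :: "('q, 'a) mealy \<Rightarrow> bool" where
  "mealy A \<longleftrightarrow> finite (states A) \<and> states A \<noteq> {} \<and> finite (alph A) \<and> alph A \<noteq> {}
     \<and> (\<forall>i\<in>alph A. \<forall>x\<in>states A. trans A i x \<in> states A)
     \<and> (\<forall>x\<in>states A. \<forall>i\<in>alph A. outp A x i \<in> alph A)"

definition invertible :: "('q, 'a) mealy \<Rightarrow> bool" where
  "invertible A \<longleftrightarrow> (\<forall>x\<in>states A. bij_betw (outp A x) (alph A) (alph A))"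

definition reversible :: "('q, 'a) mealy \<Rightarrow> bool" where
  "reversible A \<longleftrightarrow> (\<forall>i\<in>alph A. bij_betw (trans A i) (states A) (states A))"

definition bireversible :: "('q, 'a) mealy \<Rightarrow> bool" where
  "bireversible A \<longleftrightarrow> invertible A \<and> reversible A \<and>
     (\<forall>j\<in>alph A. bij_betw (\<lambda>x. trans A (inv_into (alph A) (outp A x) j) x) (states A) (states A))"

definition connected_mealy :: "('q, 'a) mealy \<Rightarrow> bool" where
  "connected_mealy A \<longleftrightarrow>
     (let E = {(x, trans A i x) | x i. x \<in> states A \<and> i \<in> alph A}
      in \<forall>x\<in>states A. \<forall>y\<in>states A. (x, y) \<in> (E \<union> E\<inverse>)\<^sup>*)"

definition words :: "('q, 'a) mealy \<Rightarrow> nat \<Rightarrow> 'q list set" where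
  "words A n = {u. set u \<subseteq> states A \<and> length u = n}"

fun deltaw :: "('q, 'a) mealy \<Rightarrow> 'a \<Rightarrow> 'q list \<Rightarrow> 'q list" where
  "deltaw A i [] = []"
| "deltaw A i (x # u) = trans A i x # deltaw A (outp A x i) u"

definition edges_pow :: "('q, 'a) mealy \<Rightarrow> nat \<Rightarrow> ('q list \<times> 'q list) set" where
  "edges_pow A n = {(u, deltaw A i u) | u i. u \<in> words A n \<and> i \<in> alph A}"

definition comp :: "('q, 'a) mealy \<Rightarrow> nat \<Rightarrow> 'q list \<Rightarrow> 'q list set" where
  "comp A n u = {v \<in> words A n. (u, v) \<in> (edges_pow A n \<union> (edges_pow A n)\<inverse>)\<^sup>*}"

definition vertex :: "('q, 'a) mealy \<Rightarrow> nat \<Rightarrow> 'q list set \<Rightarrow> bool" where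
  "vertex A n C \<longleftrightarrow> (\<exists>u\<in>words A n. C = comp A n u)"

definition tedge :: "('q, 'a) mealy \<Rightarrow> nat \<Rightarrow> 'q list set \<Rightarrow> 'q list set \<Rightarrow> bool" where
  "tedge A n C D \<longleftrightarrow> vertex A n C \<and> vertex A (Suc n) D \<and>
     (\<exists>u\<in>C. \<exists>x\<in>states A. u @ [x] \<in> D)"

definition label :: "'q list set \<Rightarrow> 'q list set \<Rightarrow> rat" where
  "label C D = of_nat (card D) / of_nat (card C)"

text \<open>An edge is represented by the pair (top vertex, bottom vertex).
  Edge e is liftable to f if every word of bot(e) has a suffix in bot(f).\<close>
definition edge_liftable :: "'q list set \<times> 'q list set \<Rightarrow> 'q list set \<times> 'q list set \<Rightarrow> bool" where
  "edge_liftable e f \<longleftrightarrow> (\<forall>w\<in>snd e. \<exists>t v. w = t @ v \<and> v \<in> snd f)"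

text \<open>Initial paths are given by their sequence of vertices P 0, P 1, ...;
  the edge at level j is (P j, P (j+1)).\<close>
definition initial_path :: "('q, 'a) mealy \<Rightarrow> nat \<Rightarrow> (nat \<Rightarrow> 'q list set) \<Rightarrow> bool" where
  "initial_path A n P \<longleftrightarrow> P 0 = comp A 0 [] \<and> (\<forall>j<n. tedge A j (P j) (P (Suc j)))"

definition branch :: "('q, 'a) mealy \<Rightarrow> (nat \<Rightarrow> 'q list set) \<Rightarrow> bool" where
  "branch A B \<longleftrightarrow> B 0 = comp A 0 [] \<and> (\<forall>j. tedge A j (B j) (B (Suc j)))"

definition subpath_liftable :: "(nat \<Rightarrow> 'q list set) \<Rightarrow> nat \<Rightarrow> nat \<Rightarrow> nat \<Rightarrow> bool" where
  "subpath_liftable P a b m \<longleftrightarrow>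
     (\<forall>j<m. edge_liftable (P (a + j), P (Suc (a + j))) (P (b + j), P (Suc (b + j))))"

definition self_liftable_k_fin :: "nat \<Rightarrow> nat \<Rightarrow> (nat \<Rightarrow> 'q list set) \<Rightarrow> bool" where
  "self_liftable_k_fin k n P \<longleftrightarrow>
     (\<forall>i m. i + k + m \<le> n \<longrightarrow> subpath_liftable P (i + k) i m)"

definition self_liftable_k_inf :: "nat \<Rightarrow> (nat \<Rightarrow> 'q list set) \<Rightarrow> bool" where
  "self_liftable_k_inf k B \<longleftrightarrow> (\<forall>i m. subpath_liftable B (i + k) i m)"

definition self_liftable_branch :: "(nat \<Rightarrow> 'q list set) \<Rightarrow> bool" where
  "self_liftable_branch B \<longleftrightarrow> (\<exists>k>0. self_liftable_k_inf k B)"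

definition active :: "(nat \<Rightarrow> 'q list set) \<Rightarrow> bool" where
  "active B \<longleftrightarrow> \<not> (\<exists>N. \<forall>j\<ge>N. label (B j) (B (Suc j)) = 1)"

definition no_active_self_liftable_branch :: "('q, 'a) mealy \<Rightarrow> bool" where
  "no_active_self_liftable_branch A \<longleftrightarrow>
     \<not> (\<exists>B. branch A B \<and> active B \<and> self_liftable_branch B)"

definition legit_children :: "('q, 'a) mealy \<Rightarrow> nat \<Rightarrow> (nat \<Rightarrow> 'q list set) \<Rightarrow> 'q list set set" where
  "legit_children A n P =
     {F. tedge A n (P n) F \<and> edge_liftable (P n, F) (P (n - 1), P n)}"

definition jungle_trunk :: "('q, 'a) mealy \<Rightarrow> nat \<Rightarrow> (nat \<Rightarrow> 'q list set) \<Rightarrow> bool" where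
  "jungle_trunk A n P \<longleftrightarrow> 0 < n \<and> initial_path A n P \<and> self_liftable_k_fin 1 n P \<and>
     2 \<le> card (legit_children A n P) \<and> (\<forall>F\<in>legit_children A n P. label (P n) F = 1)"

definition stems :: "nat \<Rightarrow> (nat \<Rightarrow> 'q list set) \<Rightarrow> 'q list set" where
  "stems n P = P n"

end

theory Submission
  imports Defs
begin

text \<open>
  Reversibility makes every \<open>\<delta>\<^sub>a\<close> a bijection of \<open>Q\<^sup>i\<close>, and \<open>\<delta>\<^sub>a\<close> maps the words of a
  component \<open>C\<close> of \<open>\<A>\<^sup>n\<close> with prefix \<open>v\<close> injectively to those with prefix \<open>\<delta>\<^sub>a(v)\<close>, because
  components are closed under the maps \<open>\<delta>\<^sub>a\<close>. Summing these inequalities over the bijection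
  \<open>\<delta>\<^sub>a\<close> of \<open>Q\<^sup>i\<close> forces equality, so the number of extensions in \<open>C\<close> is constant along each
  component of \<open>\<A>\<^sup>i\<close>. Since truncation maps the bottom \<open>P n\<close> of the trunk into \<open>P i\<close>, this gives
  \<open>#P n = #P i \<cdot> #{stems over u}\<close>, and the trunk labels telescope to \<open>#P n / #P i\<close>.
\<close>

lemma length_deltaw [simp]: "length (deltaw A a u) = length u"
  by (induction u arbitrary: a) auto

lemma take_deltaw: "take j (deltaw A a u) = deltaw A a (take j u)"
  by (induction u arbitrary: a j) (auto split: nat.splits simp: take_Cons')

lemma prefix_deltaw: "prefix v w \<Longrightarrow> prefix (deltaw A a v) (deltaw A a w)"
proof (induction v arbitrary: a w)
  case (Cons x v)
  then show ?case by (cases w) auto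
qed simp

lemma prefix_iff_take: "prefix v w \<longleftrightarrow> take (length v) w = v"
  by (metis append_eq_conv_conj append_take_drop_id prefixE prefixI)

lemma finite_words: "mealy A \<Longrightarrow> finite (words A m)"
  unfolding words_def mealy_def using finite_lists_length_eq by auto

lemma deltaw_in_words:
  assumes "mealy A" "a \<in> alph A" "u \<in> words A m"
  shows "deltaw A a u \<in> words A m"
  using assms(2,3)
proof (induction u arbitrary: a m)
  case Nil
  then show ?case by (simp add: words_def)
next
  case (Cons x u)
  then have "x \<in> states A" "u \<in> words A (length u)" "m = Suc (length u)"
    by (auto simp: words_def)
  with Cons.prems(1) Cons.IH[of "outp A x a"] assms(1) show ?case
    by (auto simp: mealy_def words_def)
qed

lemma inj_on_deltaw_words:
  assumes "mealy A" "reversible A" "a \<in> alph A"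
  shows "inj_on (deltaw A a) (words A m)"
proof -
  have "u = v" if "a \<in> alph A" "set u \<subseteq> states A" "set v \<subseteq> states A" "length u = length v"
    "deltaw A a u = deltaw A a v" for a u v
    using that
  proof (induction u arbitrary: a v)
    case Nil
    then show ?case by simp
  next
    case (Cons x u)
    then obtain y v' where v: "v = y # v'" by (cases v) auto
    have "inj_on (trans A a) (states A)"
      using assms(2) Cons.prems(1) by (auto simp: reversible_def bij_betw_def)
    with Cons.prems v have "x = y" by (auto simp: inj_on_def)
    moreover have "outp A x a \<in> alph A"
      using assms(1) Cons.prems(1,2) by (auto simp: mealy_def)
    ultimately show ?case
      using Cons.IH[of "outp A x a" v'] Cons.prems v by auto
  qed
  then show ?thesis
    using assms(3) by (auto simp: inj_on_def words_def)
qed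

lemma bij_betw_deltaw_words:
  assumes "mealy A" "reversible A" "a \<in> alph A"
  shows "bij_betw (deltaw A a) (words A m) (words A m)"
  using deltaw_in_words[OF assms(1,3)] inj_on_deltaw_words[OF assms] finite_words[OF assms(1)]
  by (simp add: bij_betw_def endo_inj_surj image_subsetI)

lemma comp_eq_comp:
  assumes "v \<in> comp A m u"
  shows "comp A m v = comp A m u"
proof -
  let ?R = "(edges_pow A m \<union> (edges_pow A m)\<inverse>)\<^sup>*"
  have "sym ?R"
    by (intro sym_rtrancl) (auto simp: sym_def)
  moreover have "(u, v) \<in> ?R"
    using assms by (simp add: comp_def)
  ultimately show ?thesis
    unfolding comp_def by (blast intro: rtrancl_trans dest: symD)
qed

lemma take_in_comp:
  assumes "v \<in> comp A m u" "j \<le> m"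
  shows "take j v \<in> comp A j (take j u)"
proof -
  have "(u, v) \<in> (edges_pow A m \<union> (edges_pow A m)\<inverse>)\<^sup>*"
    using assms(1) by (simp add: comp_def)
  then have "(take j u, take j v) \<in> (edges_pow A j \<union> (edges_pow A j)\<inverse>)\<^sup>*"
  proof induction
    case (step y z)
    have "take j x \<in> words A j" if "x \<in> words A m" for x
      using that assms(2) by (auto simp: words_def dest: in_set_takeD)
    with step.hyps(2) have "(take j y, take j z) \<in> edges_pow A j \<union> (edges_pow A j)\<inverse>"
      by (auto simp: edges_pow_def take_deltaw)
    with step.IH show ?case
      by (rule rtrancl_into_rtrancl)
  qed simp
  with assms show ?thesis
    by (auto simp: comp_def words_def dest: in_set_takeD)
qed

lemma deltaw_image_comp_subset:
  assumes "mealy A" "a \<in> alph A"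
  shows "deltaw A a ` comp A m u \<subseteq> comp A m u"
proof
  fix z
  assume "z \<in> deltaw A a ` comp A m u"
  then obtain v where v: "v \<in> comp A m u" and z: "z = deltaw A a v" by blast
  have "v \<in> words A m"
    using v by (simp add: comp_def)
  then have "(v, z) \<in> edges_pow A m" "z \<in> words A m"
    using assms z deltaw_in_words by (auto simp: edges_pow_def)
  with v show "z \<in> comp A m u"
    by (auto simp: comp_def intro: rtrancl_into_rtrancl)
qed

definition extensions :: "'q list set \<Rightarrow> 'q list \<Rightarrow> 'q list set" where
  "extensions S v = {w \<in> S. prefix v w}"

lemma card_extensions_le_deltaw:
  assumes "mealy A" "reversible A" "a \<in> alph A" "S \<subseteq> words A n" "deltaw A a ` S \<subseteq> S"
  shows "card (extensions S v) \<le> card (extensions S (deltaw A a v))"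
proof (rule card_inj_on_le)
  show "inj_on (deltaw A a) (extensions S v)"
    using inj_on_deltaw_words[OF assms(1-3)] assms(4)
    by (auto simp: extensions_def intro: inj_on_subset)
  show "deltaw A a ` extensions S v \<subseteq> extensions S (deltaw A a v)"
    using assms(5) by (auto simp: extensions_def prefix_deltaw)
  show "finite (extensions S (deltaw A a v))"
    using assms(4) finite_words[OF assms(1)] by (auto simp: extensions_def intro: finite_subset)
qed

text \<open>The inequalities of the previous lemma sum to an equality over the bijection \<open>\<delta>\<^sub>a\<close> of \<open>Q\<^sup>i\<close>.\<close>

lemma card_extensions_deltaw:
  assumes "mealy A" "reversible A" "a \<in> alph A" "S \<subseteq> words A n" "deltaw A a ` S \<subseteq> S"
    and "v \<in> words A i"
  shows "card (extensions S (deltaw A a v)) = card (extensions S v)"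
proof -
  let ?f = "\<lambda>v. card (extensions S v)"
  have "(\<Sum>v\<in>words A i. ?f v) = (\<Sum>v\<in>words A i. ?f (deltaw A a v))"
    using sum.reindex_bij_betw[OF bij_betw_deltaw_words[OF assms(1-3)], where g = ?f] by simp
  with sum_mono_inv[of ?f "words A i" "\<lambda>v. ?f (deltaw A a v)"] show ?thesis
    using card_extensions_le_deltaw[OF assms(1-5)] assms(6) finite_words[OF assms(1)]
    by (simp add: le_antisym)
qed

lemma card_extensions_comp:
  assumes "mealy A" "reversible A" "S \<subseteq> words A n" "\<forall>a\<in>alph A. deltaw A a ` S \<subseteq> S"
    and "v \<in> comp A i u"
  shows "card (extensions S v) = card (extensions S u)"
proof -
  have "(u, v) \<in> (edges_pow A i \<union> (edges_pow A i)\<inverse>)\<^sup>*"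
    using assms(5) by (simp add: comp_def)
  then show ?thesis
  proof induction
    case (step y z)
    then have "card (extensions S y) = card (extensions S z)"
      using card_extensions_deltaw[OF assms(1,2) _ assms(3)] assms(4)
      by (auto simp: edges_pow_def)
    with step.IH show ?case by simp
  qed simp
qed

lemma vertex_subset_words: "vertex A m C \<Longrightarrow> C \<subseteq> words A m"
  by (auto simp: vertex_def comp_def)

lemma vertex_eq_comp: "vertex A m C \<Longrightarrow> v \<in> C \<Longrightarrow> C = comp A m v"
  unfolding vertex_def using comp_eq_comp by metis

lemma card_vertex_eq_mult_card_extensions:
  assumes "mealy A" "reversible A" "vertex A n C" "vertex A i D" "i \<le> n"
    and "take i ` C \<subseteq> D" "u \<in> D"
  shows "card C = card D * card (extensions C u)"
proof -
  have C_words: "C \<subseteq> words A n" and D_words: "D \<subseteq> words A i"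
    using assms(3,4) by (simp_all add: vertex_subset_words)
  then have fin: "finite C" "finite D"
    using finite_words[OF assms(1)] by (auto intro: finite_subset)
  have C_closed: "\<forall>a\<in>alph A. deltaw A a ` C \<subseteq> C"
    using assms(3) deltaw_image_comp_subset[OF assms(1)] by (auto simp: vertex_def image_subset_iff)
  have ext: "extensions C v = {w \<in> C. take i w = v}" if "v \<in> D" for v
    using that C_words D_words assms(5)
    by (auto simp: extensions_def words_def prefix_iff_take)
  have "C = (\<Union>v\<in>D. extensions C v)"
    using assms(6) by (auto simp: ext)
  then have "card C = card (\<Union>v\<in>D. extensions C v)"
    by (rule arg_cong)
  also have "\<dots> = (\<Sum>v\<in>D. card (extensions C v))"
    using fin by (intro card_UN_disjoint) (auto simp: ext)
  also have "\<dots> = (\<Sum>v\<in>D. card (extensions C u))"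
    using card_extensions_comp[OF assms(1,2) C_words C_closed] vertex_eq_comp[OF assms(4,7)]
    by simp
  finally show ?thesis by simp
qed

lemma take_in_tedge:
  assumes "tedge A k C D" "w \<in> D"
  shows "take k w \<in> C"
proof -
  obtain v x where C: "vertex A k C" "v \<in> C" and D: "vertex A (Suc k) D" "v @ [x] \<in> D"
    using assms(1) by (auto simp: tedge_def)
  have "length v = k"
    using vertex_subset_words[OF C(1)] C(2) by (auto simp: words_def)
  moreover have "w \<in> comp A (Suc k) (v @ [x])"
    using vertex_eq_comp[OF D] assms(2) by simp
  ultimately have "take k w \<in> comp A k v"
    using take_in_comp[of w A "Suc k" "v @ [x]" k] by simp
  then show ?thesis
    using vertex_eq_comp[OF C] by simp
qed

lemma vertex_initial_path: "initial_path A n P \<Longrightarrow> j \<le> n \<Longrightarrow> vertex A j (P j)"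
  by (cases j) (auto simp: initial_path_def tedge_def vertex_def words_def)

lemma take_in_initial_path:
  assumes "initial_path A n P" "w \<in> P n" "j \<le> n"
  shows "take j w \<in> P j"
  using assms(3)
proof (induction j rule: inc_induct)
  case base
  show ?case
    using assms(2) vertex_subset_words[OF vertex_initial_path[OF assms(1) order_refl]]
    by (auto simp: words_def)
next
  case (step k)
  have "tedge A k (P k) (P (Suc k))"
    using assms(1) step.hyps(2) by (simp add: initial_path_def)
  from take_in_tedge[OF this step.IH] show ?case
    by (simp add: min_def)
qed

theorem lemma5p12:
  fixes A :: "('q, 'a) mealy" and n :: nat and P :: "nat \<Rightarrow> 'q list set"
  assumes "mealy A"
    and "connected_mealy A"
    and "bireversible A"
    and "no_active_self_liftable_branch A"
    and "jungle_trunk A n P"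
  shows "\<forall>i\<le>n. \<forall>u\<in>words A i. (\<exists>w\<in>stems n P. prefix u w) \<longrightarrow>
           of_nat (card {w \<in> stems n P. prefix u w}) = (\<Prod>j\<in>{Suc i..n}. label (P (j - 1)) (P j))"
proof (intro allI impI ballI)
  fix i u
  assume i: "i \<le> n" and u: "u \<in> words A i" and "\<exists>w\<in>stems n P. prefix u w"
  then obtain w where w: "w \<in> P n" "prefix u w" by (auto simp: stems_def)
  have rev: "reversible A" and path: "initial_path A n P"
    using assms(3,5) by (simp_all add: bireversible_def jungle_trunk_def)
  have "take i ` P n \<subseteq> P i"
    using take_in_initial_path[OF path _ i] by blast
  moreover have "u \<in> P i"
    using u w take_in_initial_path[OF path w(1) i] by (simp add: words_def prefix_iff_take)
  ultimately have "card (P n) = card (P i) * card (extensions (P n) u)"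
    using card_vertex_eq_mult_card_extensions[OF assms(1) rev] vertex_initial_path[OF path] i
    by blast
  moreover have "card (P j) \<noteq> 0" if "j \<le> n" for j
    using take_in_initial_path[OF path w(1) that] vertex_initial_path[OF path that]
      vertex_subset_words finite_words[OF assms(1)] by (metis card_0_eq empty_iff finite_subset)
  ultimately show "of_nat (card {w \<in> stems n P. prefix u w}) = (\<Prod>j\<in>{Suc i..n}. label (P (j - 1)) (P j))"
    using prod_telescope''[of i n "\<lambda>j. of_nat (card (P j)) :: rat"] i
    by (simp add: label_def extensions_def stems_def)
qed

end
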